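(* Let $X$ be a connected, locally compact Polish space with a partial order $\le$ whose strict part is $<$, and suppose there is $M\subseteq X$ such that: (i) $M$ has at least two elements, is connected, and is totally ordered by $<$; (ii) for every $m\in M$ and every neighborhood $U$ of $m$ in $X$ there are $\underline m,\overline m\in M$ with $m\in[\underline m,\overline m]\subseteq U$, where moreover $\overline m$ can be chosen with $m<\overline m$ if $m$ is not the largest element of $M$, and $\underline m$ can be chosen with $\underline m<m$ if $m$ is not the smallest element of $M$; (iii) for every bounded sequence $(x_n)$ in $X$ there are $\underline m,\overline m\in M$ with $\underline m\le x_n\le\overline m$ for all sufficiently large $n$. Let $\mathcal{U}$ be the set of continuous strictly increasing functions $X\to\mathbb{R}$ with the topology of uniform convergence on compact sets, and $\mathcal{R}^{\mathrm{mon}}$ the set of continuous strictly monotone preferences on $X$ with the topology of closed convergence. Define $\Phi:\mathcal{U}\to\mathcal{R}^{\mathrm{mon}}$ by $x\mathrel{\Phi(u)}y$ iff $u(x)\ge u(y)$. Then $\Phi$ is an open map.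
   Context: $[\underline m,\overline m]=\{z\in X:\underline m\le z\le\overline m\}$. A function $u$ is strictly increasing if $x<y$ implies $u(x)<u(y)$. A preference is a complete transitive binary relation; continuous if closed in $X\times X$; strictly monotone if $y<x$ implies $x\succ y$. Closed convergence on closed subsets of $X\times X$: $F^n\to F$ iff $F$ equals both the set of points every neighborhood of which meets $F^n$ for all large $n$, and the set of points every neighborhood of which meets $F^n$ for infinitely many $n$. Boundedness in (iii) refers to a metric compatible with the topology of $X$. *)

theory Defs
  imports "HOL-Analysis.Analysis"
begin

definition Polish_space :: "'a topology \<Rightarrow> bool" where
  "Polish_space T \<longleftrightarrow> completely_metrizable_space T \<and> separable_space T"

definition utilities :: "('a::{topological_space,order} \<Rightarrow> real) set" where
  "utilities = {u. continuous_on UNIV u \<and> (\<forall>x y. x < y \<longrightarrow> u x < u y)}"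

text \<open>Preferences as subsets of X x X: (x,y) in R means x is weakly preferred to y.\<close>
definition preference :: "('a \<times> 'a) set \<Rightarrow> bool" where
  "preference R \<longleftrightarrow> (\<forall>x y. (x, y) \<in> R \<or> (y, x) \<in> R) \<and> trans R"

definition mono_prefs :: "(('a::{topological_space,order}) \<times> 'a) set set" where
  "mono_prefs = {R. preference R \<and> closed R \<and>
      (\<forall>x y. y < x \<longrightarrow> (x, y) \<in> R \<and> (y, x) \<notin> R)}"

definition Phi :: "('a \<Rightarrow> real) \<Rightarrow> ('a \<times> 'a) set" where
  "Phi u = {(x, y). u x \<ge> u y}"

definition open_ucc :: "('a::{topological_space,order} \<Rightarrow> real) set \<Rightarrow> bool" where
  "open_ucc S \<longleftrightarrow> S \<subseteq> utilities \<and>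
     (\<forall>u\<in>S. \<exists>K e. compact K \<and> e > 0 \<and>
        (\<forall>v\<in>utilities. (\<forall>x\<in>K. \<bar>v x - u x\<bar> < e) \<longrightarrow> v \<in> S))"

definition closed_conv :: "(nat \<Rightarrow> 'b::topological_space set) \<Rightarrow> 'b set \<Rightarrow> bool" where
  "closed_conv F G \<longleftrightarrow>
     G = {p. \<forall>V. open V \<and> p \<in> V \<longrightarrow> (\<forall>\<^sub>F n in sequentially. F n \<inter> V \<noteq> {})} \<and>
     G = {p. \<forall>V. open V \<and> p \<in> V \<longrightarrow> (\<exists>\<^sub>F n in sequentially. F n \<inter> V \<noteq> {})}"

text \<open>Topology of closed convergence on the monotone preferences: the topology
  determined by closed convergence of sequences (sequentially open sets).\<close>
definition open_cc :: "(('a::{topological_space,order}) \<times> 'a) set set \<Rightarrow> bool" where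
  "open_cc S \<longleftrightarrow> S \<subseteq> mono_prefs \<and>
     (\<forall>R\<in>S. \<forall>F. (\<forall>n. F n \<in> mono_prefs) \<and> closed_conv F R \<longrightarrow>
        (\<forall>\<^sub>F n in sequentially. F n \<in> S))"

end

theory Submission
  imports Defs
begin

text \<open>For a monotone preference R every x is indifferent to some point rep R x of the
  chain M: the upper and lower contour sets of x cut M into two relatively closed sets
  that cover the connected set M, and both are nonempty by (iii). For any utility u,
  u \<circ> rep R is then a utility representing R, continuous by (ii). If R_n converges
  to \<Phi>(u), the utilities u \<circ> rep R_n converge to u uniformly on compact sets:
  otherwise the intermediate value theorem for u on M yields a point of M that the R_n
  frequently rank on the wrong side of a limit point, and the closed limit \<Phi>(u)
  inherits this. So every R_n with n large is the image of a utility close to u.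
  Only (ii), (iii) for constant sequences, and the connectedness and total order of M
  are used.\<close>

lemma mono_prefs_total: "R \<in> mono_prefs \<Longrightarrow> (x, y) \<notin> R \<Longrightarrow> (y, x) \<in> R"
  unfolding mono_prefs_def preference_def by blast

lemma mono_prefs_trans: "R \<in> mono_prefs \<Longrightarrow> (x, y) \<in> R \<Longrightarrow> (y, z) \<in> R \<Longrightarrow> (x, z) \<in> R"
  unfolding mono_prefs_def preference_def by (blast dest: transD)

lemma mono_prefs_closed: "R \<in> mono_prefs \<Longrightarrow> closed R"
  unfolding mono_prefs_def by blast

lemma mono_prefs_strict: "R \<in> mono_prefs \<Longrightarrow> y < x \<Longrightarrow> (y, x) \<notin> R"
  unfolding mono_prefs_def by blast

lemma mono_prefs_ge:
  assumes "R \<in> mono_prefs" and "y \<le> x"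
  shows "(x, y) \<in> R"
proof -
  from \<open>y \<le> x\<close> consider "y < x" | "y = x"
    by (auto simp: order.order_iff_strict)
  then show ?thesis
    using assms(1) unfolding mono_prefs_def preference_def by cases blast+
qed

lemma mono_prefs_on_chain:
  assumes "Complete_Partial_Order.chain (\<le>) C" and "R \<in> mono_prefs"
    and "a \<in> C" and "b \<in> C"
  shows "(a, b) \<in> R \<longleftrightarrow> b \<le> a"
proof
  assume "(a, b) \<in> R"
  show "b \<le> a"
  proof (rule ccontr)
    assume "\<not> b \<le> a"
    then have "a < b"
      using assms(1,3,4) unfolding Complete_Partial_Order.chain_def by (auto simp: less_le)
    with \<open>(a, b) \<in> R\<close> show False
      using mono_prefs_strict[OF assms(2)] by blast
  qed
qed (rule mono_prefs_ge[OF assms(2)])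

lemma utilities_mono:
  assumes "u \<in> utilities" and "x \<le> y"
  shows "u x \<le> u y"
proof -
  from \<open>x \<le> y\<close> consider "x < y" | "x = y"
    by (auto simp: order.order_iff_strict)
  then show ?thesis
    using assms(1) unfolding utilities_def by cases (auto intro: less_imp_le)
qed

lemma Phi_in_mono_prefs:
  assumes "u \<in> utilities"
  shows "Phi u \<in> mono_prefs"
proof -
  have c: "continuous_on UNIV u" and strict: "\<And>x y. x < y \<Longrightarrow> u x < u y"
    using assms unfolding utilities_def by blast+
  have "Phi u = {p. u (snd p) \<le> u (fst p)}"
    unfolding Phi_def by auto
  also have "closed \<dots>"
    by (intro closed_Collect_le continuous_on_compose2[OF c] continuous_intros) auto
  finally have "closed (Phi u)" .
  moreover have "trans (Phi u)"
    unfolding Phi_def trans_def by auto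
  ultimately show ?thesis
    unfolding mono_prefs_def preference_def Phi_def using strict by (auto simp: not_le less_imp_le)
qed

lemma utilities_le_iff_on_chain:
  assumes "Complete_Partial_Order.chain (\<le>) C" and "u \<in> utilities"
    and "a \<in> C" and "b \<in> C"
  shows "u a \<le> u b \<longleftrightarrow> a \<le> b"
  using mono_prefs_on_chain[OF assms(1) Phi_in_mono_prefs[OF assms(2)] assms(4,3)]
  unfolding Phi_def by simp

lemma closed_conv_limsup:
  assumes "closed_conv F G" and "strict_mono g" and "y \<longlonglongrightarrow> p"
    and "\<exists>\<^sub>F k in sequentially. y k \<in> F (g k)"
  shows "p \<in> G"
proof -
  have "\<exists>\<^sub>F n in sequentially. F n \<inter> V \<noteq> {}" if "open V" "p \<in> V" for V
  proof -
    have "\<forall>\<^sub>F k in sequentially. y k \<in> V"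
      using assms(3) that topological_tendstoD by blast
    with assms(4) have "\<exists>\<^sub>F k in sequentially. F (g k) \<inter> V \<noteq> {}"
      by (rule frequently_eventually_frequently[THEN frequently_elim1]) blast
    then show ?thesis
      using filterlim_subseq[OF assms(2)]
      unfolding filterlim_iff frequently_def by blast
  qed
  then show ?thesis
    using assms(1) unfolding closed_conv_def by blast
qed

locale bracketing_chain =
  fixes M :: "'a::{first_countable_topology,t2_space,order} set"
  assumes chain_M: "Complete_Partial_Order.chain (\<le>) M"
    and connected_M: "connected M"
    and M_brackets: "\<And>x. \<exists>ml\<in>M. \<exists>mu\<in>M. ml \<le> x \<and> x \<le> mu"
begin

lemma ex_indifferent_in_M:
  assumes R: "R \<in> mono_prefs"
  shows "\<exists>m\<in>M. (x, m) \<in> R \<and> (m, x) \<in> R"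
proof -
  obtain ml mu where "ml \<in> M" "mu \<in> M" "ml \<le> x" "x \<le> mu"
    using M_brackets by blast
  define A where "A = M \<inter> (\<lambda>m. (m, x)) -` R"
  define B where "B = M \<inter> (\<lambda>m. (x, m)) -` R"
  have "closedin (top_of_set M) A" "closedin (top_of_set M) B"
    unfolding A_def B_def
    by (intro closedin_closed_Int closed_vimage mono_prefs_closed[OF R] continuous_intros)+
  moreover have "M \<subseteq> A \<union> B"
    unfolding A_def B_def using mono_prefs_total[OF R] by blast
  moreover have "mu \<in> A" "ml \<in> B"
    unfolding A_def B_def using \<open>ml \<in> M\<close> \<open>mu \<in> M\<close> \<open>ml \<le> x\<close> \<open>x \<le> mu\<close>
      mono_prefs_ge[OF R] by blast+
  ultimately have "A \<inter> B \<noteq> {}"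
    using connected_M unfolding connected_closedin by blast
  then show ?thesis
    unfolding A_def B_def by blast
qed

definition rep :: "('a \<times> 'a) set \<Rightarrow> 'a \<Rightarrow> 'a" where
  "rep R x = (SOME m. m \<in> M \<and> (x, m) \<in> R \<and> (m, x) \<in> R)"

lemma rep:
  assumes "R \<in> mono_prefs"
  shows "rep R x \<in> M" and "(x, rep R x) \<in> R" and "(rep R x, x) \<in> R"
proof -
  have "\<exists>m. m \<in> M \<and> (x, m) \<in> R \<and> (m, x) \<in> R"
    using ex_indifferent_in_M[OF assms] by blast
  from someI_ex[OF this] show "rep R x \<in> M" "(x, rep R x) \<in> R" "(rep R x, x) \<in> R"
    unfolding rep_def by blast+
qed

lemma pref_chain_left_iff:
  assumes R: "R \<in> mono_prefs" and "a \<in> M"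
  shows "(a, x) \<in> R \<longleftrightarrow> rep R x \<le> a"
proof -
  have "(a, x) \<in> R \<longleftrightarrow> (a, rep R x) \<in> R"
    using rep[OF R] mono_prefs_trans[OF R] by meson
  then show ?thesis
    using mono_prefs_on_chain[OF chain_M R \<open>a \<in> M\<close> rep(1)[OF R]] by simp
qed

lemma pref_chain_right_iff:
  assumes R: "R \<in> mono_prefs" and "b \<in> M"
  shows "(x, b) \<in> R \<longleftrightarrow> b \<le> rep R x"
proof -
  have "(x, b) \<in> R \<longleftrightarrow> (rep R x, b) \<in> R"
    using rep[OF R] mono_prefs_trans[OF R] by meson
  then show ?thesis
    using mono_prefs_on_chain[OF chain_M R rep(1)[OF R] \<open>b \<in> M\<close>] by simp
qed

lemma pref_iff_rep_le:
  assumes R: "R \<in> mono_prefs"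
  shows "(x, y) \<in> R \<longleftrightarrow> rep R y \<le> rep R x"
  using rep[OF R] mono_prefs_trans[OF R] pref_chain_left_iff[OF R rep(1)[OF R]] by meson

lemma eventually_rep_ge:
  assumes R: "R \<in> mono_prefs" and "a \<in> M" and "a \<le> rep R x0"
    and "a < rep R x0 \<or> (\<forall>z\<in>M. rep R x0 \<le> z)"
  shows "\<forall>\<^sub>F x in nhds x0. a \<le> rep R x"
  using assms(4)
proof
  assume "a < rep R x0"
  have "{x. \<not> rep R x \<le> a} = - ((\<lambda>x. (a, x)) -` R)"
    using pref_chain_left_iff[OF R \<open>a \<in> M\<close>] by auto
  moreover have "closed ((\<lambda>x. (a, x)) -` R)"
    by (intro closed_vimage mono_prefs_closed[OF R] continuous_intros)
  ultimately have "open {x. \<not> rep R x \<le> a}"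
    by (simp add: open_Compl)
  then have "\<forall>\<^sub>F x in nhds x0. x \<in> {x. \<not> rep R x \<le> a}"
    using \<open>a < rep R x0\<close> by (intro eventually_nhds_in_open) (auto simp: less_le_not_le)
  then show ?thesis
    by eventually_elim
      (use chain_M rep(1)[OF R] \<open>a \<in> M\<close> in \<open>auto simp: Complete_Partial_Order.chain_def\<close>)
next
  assume "\<forall>z\<in>M. rep R x0 \<le> z"
  then show ?thesis
    using \<open>a \<le> rep R x0\<close> rep(1)[OF R] by (intro always_eventually) (auto intro: order_trans)
qed

lemma eventually_rep_le:
  assumes R: "R \<in> mono_prefs" and "b \<in> M" and "rep R x0 \<le> b"
    and "rep R x0 < b \<or> (\<forall>z\<in>M. z \<le> rep R x0)"
  shows "\<forall>\<^sub>F x in nhds x0. rep R x \<le> b"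
  using assms(4)
proof
  assume "rep R x0 < b"
  have "{x. \<not> b \<le> rep R x} = - ((\<lambda>x. (x, b)) -` R)"
    using pref_chain_right_iff[OF R \<open>b \<in> M\<close>] by auto
  moreover have "closed ((\<lambda>x. (x, b)) -` R)"
    by (intro closed_vimage mono_prefs_closed[OF R] continuous_intros)
  ultimately have "open {x. \<not> b \<le> rep R x}"
    by (simp add: open_Compl)
  then have "\<forall>\<^sub>F x in nhds x0. x \<in> {x. \<not> b \<le> rep R x}"
    using \<open>rep R x0 < b\<close> by (intro eventually_nhds_in_open) (auto simp: less_le_not_le)
  then show ?thesis
    by eventually_elim
      (use chain_M rep(1)[OF R] \<open>b \<in> M\<close> in \<open>auto simp: Complete_Partial_Order.chain_def\<close>)
next
  assume "\<forall>z\<in>M. z \<le> rep R x0"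
  then show ?thesis
    using \<open>rep R x0 \<le> b\<close> rep(1)[OF R] by (intro always_eventually) (auto intro: order_trans)
qed

lemma Phi_rep:
  assumes R: "R \<in> mono_prefs" and u: "u \<in> utilities"
  shows "Phi (u \<circ> rep R) = R"
proof -
  have "u (rep R y) \<le> u (rep R x) \<longleftrightarrow> (x, y) \<in> R" for x y
    using utilities_le_iff_on_chain[OF chain_M u rep(1)[OF R, of y] rep(1)[OF R, of x]]
      pref_iff_rep_le[OF R] by simp
  then show ?thesis
    unfolding Phi_def by auto
qed

lemma utility_image_M_interval:
  assumes u: "u \<in> utilities" and "a \<in> M" and "b \<in> M" and "u a \<le> c" and "c \<le> u b"
  obtains m where "m \<in> M" and "u m = c"
proof -
  have "connected (u ` M)"
    using u unfolding utilities_def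
    by (intro connected_continuous_image[OF _ connected_M]) (auto intro: continuous_on_subset)
  then show ?thesis
    using connectedD_interval[of "u ` M" "u a" "u b" c] assms that by blast
qed

lemma eventually_rep_below:
  assumes u: "u \<in> utilities" and F: "\<And>n. F n \<in> mono_prefs" and cc: "closed_conv F (Phi u)"
    and g: "strict_mono g" and y: "y \<longlonglongrightarrow> l" and "\<epsilon> > 0"
  shows "\<forall>\<^sub>F k in sequentially. u (rep (F (g k)) (y k)) < u l + \<epsilon>"
proof (rule ccontr)
  assume "\<not> ?thesis"
  then have high: "\<exists>\<^sub>F k in sequentially. u l + \<epsilon> \<le> u (rep (F (g k)) (y k))"
    by (simp add: not_eventually not_less)
  then obtain k0 where k0: "u l + \<epsilon> \<le> u (rep (F (g k0)) (y k0))"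
    using frequently_ex by blast
  obtain ml where "ml \<in> M" "ml \<le> l"
    using M_brackets by blast
  have "u ml \<le> u l + \<epsilon> / 2" "u l + \<epsilon> / 2 \<le> u (rep (F (g k0)) (y k0))"
    using utilities_mono[OF u \<open>ml \<le> l\<close>] k0 \<open>\<epsilon> > 0\<close> by simp_all
  then obtain m where "m \<in> M" and m: "u m = u l + \<epsilon> / 2"
    by (rule utility_image_M_interval[OF u \<open>ml \<in> M\<close> rep(1)[OF F]])
  have "\<exists>\<^sub>F k in sequentially. (y k, m) \<in> F (g k)"
    using high
  proof (rule frequently_elim1)
    fix k
    assume "u l + \<epsilon> \<le> u (rep (F (g k)) (y k))"
    then have "u m \<le> u (rep (F (g k)) (y k))"
      using m \<open>\<epsilon> > 0\<close> by simp
    then have "m \<le> rep (F (g k)) (y k)"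
      using utilities_le_iff_on_chain[OF chain_M u \<open>m \<in> M\<close> rep(1)[OF F]] by blast
    then show "(y k, m) \<in> F (g k)"
      using pref_chain_right_iff[OF F \<open>m \<in> M\<close>] by simp
  qed
  then have "(l, m) \<in> Phi u"
    by (rule closed_conv_limsup[OF cc g tendsto_Pair[OF y tendsto_const]])
  then show False
    using m \<open>\<epsilon> > 0\<close> unfolding Phi_def by simp
qed

lemma eventually_rep_above:
  assumes u: "u \<in> utilities" and F: "\<And>n. F n \<in> mono_prefs" and cc: "closed_conv F (Phi u)"
    and g: "strict_mono g" and y: "y \<longlonglongrightarrow> l" and "\<epsilon> > 0"
  shows "\<forall>\<^sub>F k in sequentially. u l - \<epsilon> < u (rep (F (g k)) (y k))"
proof (rule ccontr)
  assume "\<not> ?thesis"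
  then have low: "\<exists>\<^sub>F k in sequentially. u (rep (F (g k)) (y k)) \<le> u l - \<epsilon>"
    by (simp add: not_eventually not_less)
  then obtain k0 where k0: "u (rep (F (g k0)) (y k0)) \<le> u l - \<epsilon>"
    using frequently_ex by blast
  obtain mu where "mu \<in> M" "l \<le> mu"
    using M_brackets by blast
  have "u (rep (F (g k0)) (y k0)) \<le> u l - \<epsilon> / 2" "u l - \<epsilon> / 2 \<le> u mu"
    using utilities_mono[OF u \<open>l \<le> mu\<close>] k0 \<open>\<epsilon> > 0\<close> by simp_all
  then obtain m where "m \<in> M" and m: "u m = u l - \<epsilon> / 2"
    by (rule utility_image_M_interval[OF u rep(1)[OF F] \<open>mu \<in> M\<close>])
  have "\<exists>\<^sub>F k in sequentially. (m, y k) \<in> F (g k)"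
    using low
  proof (rule frequently_elim1)
    fix k
    assume "u (rep (F (g k)) (y k)) \<le> u l - \<epsilon>"
    then have "u (rep (F (g k)) (y k)) \<le> u m"
      using m \<open>\<epsilon> > 0\<close> by simp
    then have "rep (F (g k)) (y k) \<le> m"
      using utilities_le_iff_on_chain[OF chain_M u rep(1)[OF F] \<open>m \<in> M\<close>] by blast
    then show "(m, y k) \<in> F (g k)"
      using pref_chain_left_iff[OF F \<open>m \<in> M\<close>] by simp
  qed
  then have "(m, l) \<in> Phi u"
    by (rule closed_conv_limsup[OF cc g tendsto_Pair[OF tendsto_const y]])
  then show False
    using m \<open>\<epsilon> > 0\<close> unfolding Phi_def by simp
qed

lemma rep_tendsto:
  assumes "u \<in> utilities" and "\<And>n. F n \<in> mono_prefs" and "closed_conv F (Phi u)"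
    and "strict_mono g" and "y \<longlonglongrightarrow> l"
  shows "(\<lambda>k. u (rep (F (g k)) (y k))) \<longlonglongrightarrow> u l"
proof (rule tendstoI)
  fix \<epsilon> :: real
  assume "\<epsilon> > 0"
  with eventually_rep_below[OF assms] eventually_rep_above[OF assms]
  have "\<forall>\<^sub>F k in sequentially.
      u l - \<epsilon> < u (rep (F (g k)) (y k)) \<and> u (rep (F (g k)) (y k)) < u l + \<epsilon>"
    by (intro eventually_conj)
  then show "\<forall>\<^sub>F k in sequentially. dist (u (rep (F (g k)) (y k))) (u l) < \<epsilon>"
    by (rule eventually_mono) (auto simp: dist_real_def)
qed

lemma rep_uniform_convergence:
  assumes u: "u \<in> utilities" and F: "\<And>n. F n \<in> mono_prefs" and cc: "closed_conv F (Phi u)"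
    and K: "compact K" and "e > 0"
  shows "\<forall>\<^sub>F n in sequentially. \<forall>x\<in>K. \<bar>u (rep (F n) x) - u x\<bar> < e"
proof (rule ccontr)
  assume "\<not> ?thesis"
  then have "infinite {n. \<exists>x\<in>K. e \<le> \<bar>u (rep (F n) x) - u x\<bar>}"
    unfolding frequently_cofinite[symmetric] cofinite_eq_sequentially
    by (simp add: not_eventually not_less)
  then obtain r :: "nat \<Rightarrow> nat" where r: "strict_mono r"
    and "\<forall>k. \<exists>x\<in>K. e \<le> \<bar>u (rep (F (r k)) x) - u x\<bar>"
    using infinite_enumerate by blast
  then obtain xs where xs: "\<And>k. xs k \<in> K" "\<And>k. e \<le> \<bar>u (rep (F (r k)) (xs k)) - u (xs k)\<bar>"
    by metis
  obtain l s where "l \<in> K" and s: "strict_mono s" and lim: "(xs \<circ> s) \<longlonglongrightarrow> l"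
    using seq_compactE[OF compact_imp_seq_compact[OF K]] xs(1) by metis
  have "isCont u l"
    using u unfolding utilities_def by (simp add: continuous_on_eq_continuous_at)
  then have "(\<lambda>k. u (rep (F (r (s k))) (xs (s k))) - u (xs (s k))) \<longlonglongrightarrow> u l - u l"
    using rep_tendsto[OF u F cc strict_mono_o[OF r s] lim] isCont_tendsto_compose[OF _ lim]
    by (intro tendsto_diff) (simp_all add: o_def)
  then have "\<forall>\<^sub>F k in sequentially. \<bar>u (rep (F (r (s k))) (xs (s k))) - u (xs (s k))\<bar> < e"
    using tendstoD[OF _ \<open>e > 0\<close>] by (force simp: dist_real_def)
  then show False
    using xs(2) by (meson eventually_sequentially le_refl not_less)
qed

end

locale locally_bracketing_chain = bracketing_chain +
  assumes M_local_brackets: "\<forall>m\<in>M. \<forall>U. open U \<and> m \<in> U \<longrightarrow>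
           (\<exists>ml\<in>M. \<exists>mu\<in>M. m \<in> {ml..mu} \<and> {ml..mu} \<subseteq> U \<and>
              (\<not> (\<forall>z\<in>M. z \<le> m) \<longrightarrow> m < mu) \<and>
              (\<not> (\<forall>z\<in>M. m \<le> z) \<longrightarrow> ml < m))"
begin

lemma rep_continuous:
  assumes R: "R \<in> mono_prefs" and u: "u \<in> utilities"
  shows "continuous_on UNIV (u \<circ> rep R)"
proof (intro continuous_at_imp_continuous_on ballI)
  fix x0
  have "continuous_on UNIV u"
    using u unfolding utilities_def by blast
  then have "open (u -` ball (u (rep R x0)) \<epsilon>)" for \<epsilon>
    by (intro open_vimage) auto
  show "isCont (u \<circ> rep R) x0"
    unfolding isCont_def tendsto_at_iff_tendsto_nhds
  proof (rule tendstoI)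
    fix \<epsilon> :: real
    assume "\<epsilon> > 0"
    then have "rep R x0 \<in> u -` ball (u (rep R x0)) \<epsilon>"
      by simp
    with M_local_brackets rep(1)[OF R, of x0] \<open>open (u -` ball (u (rep R x0)) \<epsilon>)\<close>
    obtain ml mu where "ml \<in> M" "mu \<in> M" "rep R x0 \<in> {ml..mu}"
      and interval: "{ml..mu} \<subseteq> u -` ball (u (rep R x0)) \<epsilon>"
      and "\<not> (\<forall>z\<in>M. z \<le> rep R x0) \<longrightarrow> rep R x0 < mu"
      and "\<not> (\<forall>z\<in>M. rep R x0 \<le> z) \<longrightarrow> ml < rep R x0"
      by blast
    then have "\<forall>\<^sub>F x in nhds x0. ml \<le> rep R x \<and> rep R x \<le> mu"
      by (intro eventually_conj eventually_rep_ge[OF R] eventually_rep_le[OF R]) auto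
    then show "\<forall>\<^sub>F x in nhds x0. dist ((u \<circ> rep R) x) ((u \<circ> rep R) x0) < \<epsilon>"
      by (rule eventually_mono) (use interval in \<open>auto simp: dist_commute\<close>)
  qed
qed

lemma rep_utility:
  assumes R: "R \<in> mono_prefs" and u: "u \<in> utilities"
  shows "u \<circ> rep R \<in> utilities"
  unfolding utilities_def
proof (intro CollectI conjI allI impI rep_continuous[OF R u])
  fix x y :: 'a
  assume "x < y"
  then have "\<not> rep R y \<le> rep R x"
    using mono_prefs_strict[OF R] pref_iff_rep_le[OF R] by blast
  then show "(u \<circ> rep R) x < (u \<circ> rep R) y"
    using utilities_le_iff_on_chain[OF chain_M u rep(1)[OF R, of y] rep(1)[OF R, of x]]
    by (simp add: not_le)
qed


lemma open_cc_Phi_image: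
  fixes S :: "('a \<Rightarrow> real) set"
  assumes S: "open_ucc S"
  shows "open_cc (Phi ` S)"
proof -
  have "\<forall>\<^sub>F n in sequentially. F n \<in> Phi ` S"
    if "u \<in> S" and F: "\<And>n. F n \<in> mono_prefs" and cc: "closed_conv F (Phi u)" for u F
  proof -
    have u: "u \<in> utilities"
      using S \<open>u \<in> S\<close> unfolding open_ucc_def by blast
    obtain K e where "compact K" "e > 0"
      and nbhd: "\<And>v. v \<in> utilities \<Longrightarrow> \<forall>x\<in>K. \<bar>v x - u x\<bar> < e \<Longrightarrow> v \<in> S"
      using S \<open>u \<in> S\<close> unfolding open_ucc_def by blast
    show ?thesis
      using rep_uniform_convergence[OF u F cc \<open>compact K\<close> \<open>e > 0\<close>]
    proof (rule eventually_mono)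
      fix n
      assume "\<forall>x\<in>K. \<bar>u (rep (F n) x) - u x\<bar> < e"
      then have "u \<circ> rep (F n) \<in> S"
        using nbhd rep_utility[OF F u] by simp
      then show "F n \<in> Phi ` S"
        using Phi_rep[OF F u] by (metis image_eqI)
    qed
  qed
  moreover have "Phi ` S \<subseteq> mono_prefs"
    using S Phi_in_mono_prefs unfolding open_ucc_def by blast
  ultimately show ?thesis
    unfolding open_cc_def by blast
qed

end

theorem theorem8:
  fixes M :: "'a::{metric_space,order} set"
  assumes "connected (UNIV :: 'a set)"
    and "locally_compact_space (euclidean :: 'a topology)"
    and "Polish_space (euclidean :: 'a topology)"
    and "\<exists>a b. a \<in> M \<and> b \<in> M \<and> a \<noteq> b"
    and "connected M"
    and "\<forall>a\<in>M. \<forall>b\<in>M. a \<noteq> b \<longrightarrow> a < b \<or> b < a"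
    and "\<forall>m\<in>M. \<forall>U. open U \<and> m \<in> U \<longrightarrow>
           (\<exists>ml\<in>M. \<exists>mu\<in>M. m \<in> {ml..mu} \<and> {ml..mu} \<subseteq> U \<and>
              (\<not> (\<forall>z\<in>M. z \<le> m) \<longrightarrow> m < mu) \<and>
              (\<not> (\<forall>z\<in>M. m \<le> z) \<longrightarrow> ml < m))"
    and "\<forall>x :: nat \<Rightarrow> 'a. bounded (range x) \<longrightarrow>
           (\<exists>ml\<in>M. \<exists>mu\<in>M. \<forall>\<^sub>F n in sequentially. ml \<le> x n \<and> x n \<le> mu)"
  shows "\<forall>S. open_ucc S \<longrightarrow> open_cc (Phi ` (S :: ('a \<Rightarrow> real) set))"
proof -
  interpret locally_bracketing_chain M
  proof unfold_locales
    show "Complete_Partial_Order.chain (\<le>) M"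
      using assms(6) unfolding Complete_Partial_Order.chain_def by (metis less_imp_le order.refl)
    show "\<exists>ml\<in>M. \<exists>mu\<in>M. ml \<le> x \<and> x \<le> mu" for x
      using assms(8)[rule_format, of "\<lambda>_. x"] by simp
  qed fact+
  show ?thesis
    using open_cc_Phi_image by blast
qed

end
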